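(* Let $g:[-1,1]\to\mathbb{R}$ be the constant function $g(x)=1/2$. For every univariate ReLU neural network $f:\mathbb{R}\to\mathbb{R}$ of any depth and any layer widths whose biases are all zero, one has $$\int_{-1}^{1}\big(g(x)-f(x)\big)^2\,dx\;\ge\;\frac18 .$$ Consequently, for any $\epsilon<1/8$ there is no such bias-free ReLU network approximating $g$ to squared-error (MSE integral) at most $\epsilon$ on $[-1,1]$.
   Context: A bias-free ReLU network computes $x\mapsto \bm{W}^{(L)}\phi(\bm{W}^{(L-1)}\cdots\phi(\bm{W}^{(1)}x))$ (with the output layer either linear or also followed by $\phi$), where $\phi(x)=\max(x,0)$ is applied componentwise and the $\bm{W}^{(l)}$ are real matrices of compatible sizes. *)

theory Defs
  imports "HOL-Analysis.Analysis"
begin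

definition relu :: "real \<Rightarrow> real" where
  "relu x = max x 0"

text \<open>Matrices are lists of rows (real lists); vectors are real lists.\<close>
definition mat_vec :: "real list list \<Rightarrow> real list \<Rightarrow> real list" where
  "mat_vec W v = map (\<lambda>row. sum_list (map2 (*) row v)) W"

definition relu_vec :: "real list \<Rightarrow> real list" where
  "relu_vec v = map relu v"

fun net_eval :: "bool \<Rightarrow> real list list list \<Rightarrow> real list \<Rightarrow> real list" where
  "net_eval b [] v = v"
| "net_eval b [W] v = (if b then relu_vec (mat_vec W v) else mat_vec W v)"
| "net_eval b (W # W' # Ws) v = net_eval b (W' # Ws) (relu_vec (mat_vec W v))"

definition univariate_net :: "nat list \<Rightarrow> real list list list \<Rightarrow> bool" where
  "univariate_net ds Ws \<longleftrightarrow>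
     Ws \<noteq> [] \<and> length ds = Suc (length Ws) \<and>
     hd ds = 1 \<and> last ds = 1 \<and> (\<forall>d\<in>set ds. d \<ge> 1) \<and>
     (\<forall>i < length Ws. length (Ws ! i) = ds ! Suc i \<and>
                       (\<forall>row \<in> set (Ws ! i). length row = ds ! i))"

definition net_fun :: "bool \<Rightarrow> real list list list \<Rightarrow> real \<Rightarrow> real" where
  "net_fun b Ws x = hd (net_eval b Ws [x])"

end

theory Submission
  imports Defs
begin

text \<open>Without biases every layer commutes with multiplication by a scalar \<open>t \<ge> 0\<close>, so
  the network function \<open>f\<close> is positively homogeneous: \<open>f x = f 1 * x\<close> for \<open>x \<ge> 0\<close> and
  \<open>f x = - f (-1) * x\<close> for \<open>x \<le> 0\<close>. On each half of \<open>[-1,1]\<close> the squared error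
  against the constant \<open>b\<close> is then \<open>b\<^sup>2 - a b + a\<^sup>2/3 \<ge> b\<^sup>2/4\<close> for some slope \<open>a\<close>, so the
  total error is at least \<open>b\<^sup>2/2\<close>, which is \<open>1/8\<close> for \<open>b = 1/2\<close>.\<close>

lemma relu_mult_nonneg: "t \<ge> 0 \<Longrightarrow> relu (t * y) = t * relu y"
  unfolding relu_def by (auto simp: max_def mult_le_0_iff intro: mult_left_mono)

lemma relu_vec_scale: "t \<ge> 0 \<Longrightarrow> relu_vec (map ((*) t) v) = map ((*) t) (relu_vec v)"
  unfolding relu_vec_def by (simp add: relu_mult_nonneg)

lemma mat_vec_scale: "mat_vec W (map ((*) t) v) = map ((*) t) (mat_vec W v)"
  unfolding mat_vec_def
  by (simp add: zip_map2 o_def split_def mult.left_commute sum_list_const_mult)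

lemma net_eval_scale:
  "t \<ge> 0 \<Longrightarrow> net_eval b Ws (map ((*) t) v) = map ((*) t) (net_eval b Ws v)"
  by (induction b Ws v rule: net_eval.induct) (auto simp: mat_vec_scale relu_vec_scale)

lemma length_net_eval: "Ws \<noteq> [] \<Longrightarrow> length (net_eval b Ws v) = length (last Ws)"
  by (induction b Ws v rule: net_eval.induct) (auto simp: mat_vec_def relu_vec_def)

lemma net_fun_pos_homogeneous:
  assumes "Ws \<noteq> []" "last Ws \<noteq> []" "t \<ge> 0"
  shows "net_fun b Ws (t * x) = t * net_fun b Ws x"
proof -
  have "net_eval b Ws [t * x] = map ((*) t) (net_eval b Ws [x])"
    using net_eval_scale[OF \<open>t \<ge> 0\<close>, of b Ws "[x]"] by simp
  moreover have "net_eval b Ws [x] \<noteq> []"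
    using length_net_eval[OF \<open>Ws \<noteq> []\<close>] \<open>last Ws \<noteq> []\<close> by (metis length_0_conv)
  ultimately show ?thesis
    unfolding net_fun_def by (cases "net_eval b Ws [x]") auto
qed

lemma univariate_net_output_width:
  assumes "univariate_net ds Ws"
  shows "length (last Ws) = 1"
proof -
  from assms have ne: "Ws \<noteq> []" and len: "length ds = Suc (length Ws)" and "last ds = 1"
    and widths: "\<forall>i < length Ws. length (Ws ! i) = ds ! Suc i"
    unfolding univariate_net_def by auto
  have "length (last Ws) = ds ! length Ws"
    using ne widths by (simp add: last_conv_nth)
  also have "\<dots> = last ds"
    using len by (simp add: last_conv_nth flip: length_0_conv)
  finally show ?thesis using \<open>last ds = 1\<close> by simp
qed

lemma has_integral_sq_linear_unit:
  "((\<lambda>x::real. (b - a * x)\<^sup>2) has_integral (b\<^sup>2 - a * b + a\<^sup>2 / 3)) {0..1}"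
proof -
  let ?F = "\<lambda>x::real. b\<^sup>2 * x - a * b * x\<^sup>2 + a\<^sup>2 * x ^ 3 / 3"
  have "((\<lambda>x. (b - a * x)\<^sup>2) has_integral (?F 1 - ?F 0)) {0..1}"
    by (rule fundamental_theorem_of_calculus)
      (auto simp flip: has_real_derivative_iff_has_vector_derivative
        intro!: derivative_eq_intros simp: power2_eq_square algebra_simps)
  then show ?thesis by simp
qed

lemma pos_homogeneous_sq_dist_const:
  fixes f :: "real \<Rightarrow> real"
  assumes hom: "\<And>t x. t \<ge> 0 \<Longrightarrow> f (t * x) = t * f x"
  shows "integral {-1..1} (\<lambda>x. (b - f x)\<^sup>2) \<ge> b\<^sup>2 / 2"
proof -
  define a c where "a = f 1" and "c = f (-1)"
  let ?err = "\<lambda>s. b\<^sup>2 - s * b + s\<^sup>2 / 3"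
  have pos: "f x = a * x" if "x \<ge> 0" for x
    using hom[OF that, of 1] by (simp add: a_def)
  have neg: "f (- x) = c * x" if "x \<ge> 0" for x
    using hom[OF that, of "-1"] by (simp add: c_def)
  have right: "((\<lambda>x. (b - f x)\<^sup>2) has_integral ?err a) {0..1}"
    by (rule has_integral_eq[OF _ has_integral_sq_linear_unit]) (simp add: pos)
  have left: "((\<lambda>x. (b - f x)\<^sup>2) has_integral ?err c) {-1..0}"
  proof -
    have "((\<lambda>x. (b - f (- x))\<^sup>2) has_integral ?err c) {0..1}"
      by (rule has_integral_eq[OF _ has_integral_sq_linear_unit]) (simp add: neg)
    then have "((\<lambda>x. (b - f (- x))\<^sup>2) has_integral ?err c) {- 0..- (- 1)}"
      by simp
    then show ?thesis
      by (rule has_integral_reflect_real[THEN iffD1])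
  qed
  have "((\<lambda>x. (b - f x)\<^sup>2) has_integral (?err c + ?err a)) {-1..1}"
    by (rule has_integral_combine[OF _ _ left right]) auto
  then have "integral {-1..1} (\<lambda>x. (b - f x)\<^sup>2) = ?err c + ?err a"
    by (rule integral_unique)
  moreover have err_bound: "?err s \<ge> b\<^sup>2 / 4" for s
    using zero_le_power2[of "s - 3 / 2 * b"] by (simp add: power2_eq_square algebra_simps)
  ultimately show ?thesis
    using err_bound[of a] err_bound[of c] by linarith
qed

theorem mainTheorem2:
  fixes ds :: "nat list" and Ws :: "real list list list" and out_relu :: bool
    and g :: "real \<Rightarrow> real"
  assumes g_def: "\<And>x. g x = 1/2"
    and net: "univariate_net ds Ws"
  shows "integral {-1..1} (\<lambda>x. (g x - net_fun out_relu Ws x)^2) \<ge> 1/8"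
proof -
  have "Ws \<noteq> []" using net unfolding univariate_net_def by simp
  moreover have "last Ws \<noteq> []" using univariate_net_output_width[OF net] by auto
  ultimately have "net_fun out_relu Ws (t * x) = t * net_fun out_relu Ws x" if "t \<ge> 0" for t x
    using net_fun_pos_homogeneous that by blast
  then have "integral {-1..1} (\<lambda>x. (1/2 - net_fun out_relu Ws x)\<^sup>2) \<ge> (1/2)\<^sup>2 / 2"
    by (rule pos_homogeneous_sq_dist_const)
  then show ?thesis by (simp add: g_def power2_eq_square)
qed

end
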